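(* Let $\mathcal{U}$ be a finite set of users, each associated with a base station $b_u$, where each base station $b$ has a finite set of integer-indexed subchannels $\mathcal{C}_b$, and assume the number of users associated with each base station $b$ is at most $|\mathcal{C}_b|$. Some users are "ongoing", each having a previously used subchannel $\bar c_u\in\mathcal{C}_{b_u}$, where ongoing users associated with the same base station have pairwise distinct previous subchannels. For each $u$ let $\mathcal{C}^t_u=\{\bar c_u\}$ if $u$ is ongoing and $\mathcal{C}^t_u=\mathcal{C}_{b_u}$ otherwise. Call two distinct users $u,u'$ conflicting if $b_u=b_{u'}$, or if both are ongoing with $\bar c_u\neq\bar c_{u'}$. Let interference weights $i^t_{u,u'}$ satisfy $i^t_{u,u}=0$, $i^t_{u,u'}=+\infty$ for conflicting pairs, and $i^t_{u,u'}\in[0,\infty)$ otherwise. Then the problem (P3): minimize over $\boldsymbol{c}^t$ with $c^t_u\in\mathcal{C}^t_u$ for all $u$ the objective $\frac12\sum_{u,u'\in\mathcal{U}}\max\{0,1-|c^t_u-c^t_{u'}|\}\, i^t_{u,u'}$ (with $0\cdot\infty=0$), has a feasible solution with finite objective value.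
   Context: In the paper, the hypotheses on the number of users per base station and on the ongoing users are guaranteed by the preceding user-association step (which never associates more users with a base station than it has subchannels, and keeps ongoing users on their previous base station and subchannel). *)

theory Defs
  imports Complex_Main "HOL-Library.Extended_Real"
begin

definition cand_set :: "('u \<Rightarrow> 'b) \<Rightarrow> ('b \<Rightarrow> int set) \<Rightarrow> 'u set \<Rightarrow> ('u \<Rightarrow> int) \<Rightarrow> 'u \<Rightarrow> int set" where
  "cand_set bs C ong prev u = (if u \<in> ong then {prev u} else C (bs u))"

definition conflicting :: "('u \<Rightarrow> 'b) \<Rightarrow> 'u set \<Rightarrow> ('u \<Rightarrow> int) \<Rightarrow> 'u \<Rightarrow> 'u \<Rightarrow> bool" where
  "conflicting bs ong prev u v \<longleftrightarrow> u \<noteq> v \<and>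
     (bs u = bs v \<or> (u \<in> ong \<and> v \<in> ong \<and> prev u \<noteq> prev v))"

text \<open>Objective of (P3); extended reals, where 0 * \<infinity> = 0.\<close>
definition P3_obj :: "'u set \<Rightarrow> ('u \<Rightarrow> 'u \<Rightarrow> ereal) \<Rightarrow> ('u \<Rightarrow> int) \<Rightarrow> ereal" where
  "P3_obj U i c = ereal (1/2) *
     (\<Sum>u\<in>U. \<Sum>v\<in>U. ereal (max 0 (1 - \<bar>real_of_int (c u) - real_of_int (c v)\<bar>)) * i u v)"

end

theory Submission
  imports Defs
begin

text \<open>Keep every ongoing user on its previous subchannel and give the remaining users of each
  base station distinct subchannels among those not already taken there; the load bound says that
  enough are left. Then conflicting users, which are exactly the pairs with infinite weight,
  never share a subchannel, so every term of the objective carrying weight \<open>\<infinity>\<close> has overlap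
  factor \<open>0\<close>, and \<open>0 * \<infinity> = 0\<close>.\<close>

lemma inj_on_extend_into:
  assumes "finite A" "finite B" "card A \<le> card B"
    and "S \<subseteq> A" "inj_on g S" "g ` S \<subseteq> B"
  shows "\<exists>f. inj_on f A \<and> f ` A \<subseteq> B \<and> (\<forall>x\<in>S. f x = g x)"
proof -
  have "finite S" using assms(1,4) finite_subset by blast
  have "card (A - S) = card A - card S"
    using assms(4) \<open>finite S\<close> by (simp add: card_Diff_subset)
  also have "\<dots> \<le> card B - card (g ` S)"
    using assms(3) card_image[OF assms(5)] by simp
  also have "\<dots> = card (B - g ` S)"
    using assms(6) \<open>finite S\<close> by (simp add: card_Diff_subset)
  finally obtain h where h: "inj_on h (A - S)" "h ` (A - S) \<subseteq> B - g ` S"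
    using card_le_inj assms(1,2) by (metis finite_Diff)
  define f where "f x = (if x \<in> S then g x else h x)" for x
  have "inj_on f (S \<union> (A - S))"
    using h assms(5) unfolding inj_on_Un f_def by (auto simp: inj_on_def)
  moreover have "S \<union> (A - S) = A" using assms(4) by blast
  ultimately have "inj_on f A" by simp
  moreover have "f ` A \<subseteq> B" using h(2) assms(6) by (auto simp: f_def)
  moreover have "\<forall>x\<in>S. f x = g x" by (simp add: f_def)
  ultimately show ?thesis by blast
qed

lemma exists_classwise_injective_extension:
  fixes bs :: "'u \<Rightarrow> 'b" and C :: "'b \<Rightarrow> 'c set"
  assumes "finite U" "\<And>b. finite (C b)" "\<And>b. card {u \<in> U. bs u = b} \<le> card (C b)"
    and "S \<subseteq> U" "\<And>u. u \<in> S \<Longrightarrow> g u \<in> C (bs u)"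
    and "\<And>u v. u \<in> S \<Longrightarrow> v \<in> S \<Longrightarrow> u \<noteq> v \<Longrightarrow> bs u = bs v \<Longrightarrow> g u \<noteq> g v"
  shows "\<exists>c. (\<forall>u\<in>U. c u \<in> C (bs u)) \<and> (\<forall>u\<in>S. c u = g u)
           \<and> (\<forall>u\<in>U. \<forall>v\<in>U. u \<noteq> v \<longrightarrow> bs u = bs v \<longrightarrow> c u \<noteq> c v)"
proof -
  have "\<forall>b. \<exists>f. inj_on f {u \<in> U. bs u = b} \<and> f ` {u \<in> U. bs u = b} \<subseteq> C b
            \<and> (\<forall>u\<in>{u \<in> S. bs u = b}. f u = g u)"
  proof (intro allI inj_on_extend_into)
    fix b
    show "finite {u \<in> U. bs u = b}" using assms(1) by simp
    show "{u \<in> S. bs u = b} \<subseteq> {u \<in> U. bs u = b}" using assms(4) by blast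
    show "inj_on g {u \<in> S. bs u = b}"
      using assms(6) unfolding inj_on_def by blast
    show "g ` {u \<in> S. bs u = b} \<subseteq> C b" using assms(5) by blast
    show "finite (C b)" by (rule assms(2))
    show "card {u \<in> U. bs u = b} \<le> card (C b)" by (rule assms(3))
  qed
  from choice[OF this] obtain f
    where "\<forall>b. inj_on (f b) {u \<in> U. bs u = b} \<and> f b ` {u \<in> U. bs u = b} \<subseteq> C b
             \<and> (\<forall>u\<in>{u \<in> S. bs u = b}. f b u = g u)"
    by (elim exE)
  then have f: "\<And>b. inj_on (f b) {u \<in> U. bs u = b}"
    "\<And>b. f b ` {u \<in> U. bs u = b} \<subseteq> C b" "\<And>b. \<forall>u\<in>{u \<in> S. bs u = b}. f b u = g u"
    by simp_all
  have inj: "f (bs u) u \<noteq> f (bs v) v" if "u \<in> U" "v \<in> U" "u \<noteq> v" "bs u = bs v" for u v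
    using inj_on_contraD[OF f(1)[of "bs v"] \<open>u \<noteq> v\<close>] that by simp
  have "f (bs u) u \<in> C (bs u)" if "u \<in> U" for u using f(2) that by blast
  moreover have "f (bs u) u = g u" if "u \<in> S" for u using f(3) that by blast
  ultimately show ?thesis using inj by (intro exI[of _ "\<lambda>u. f (bs u) u"]) simp
qed

lemma overlap_eq_0_if_ne:
  fixes a b :: int
  assumes "a \<noteq> b"
  shows "max 0 (1 - \<bar>real_of_int a - real_of_int b\<bar>) = 0"
proof -
  have "1 \<le> \<bar>a - b\<bar>" using assms by linarith
  then have "1 \<le> \<bar>real_of_int a - real_of_int b\<bar>"
    by (metis of_int_1_le_iff of_int_abs of_int_diff)
  then show ?thesis by simp
qed

lemma P3_obj_less_PInfty:
  assumes "\<And>u v. u \<in> U \<Longrightarrow> v \<in> U \<Longrightarrow> i u v = \<infinity> \<Longrightarrow> c u \<noteq> c v"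
  shows "P3_obj U i c < \<infinity>"
proof -
  have "ereal (max 0 (1 - \<bar>real_of_int (c u) - real_of_int (c v)\<bar>)) * i u v \<noteq> \<infinity>"
    if "u \<in> U" "v \<in> U" for u v
  proof (cases "i u v = \<infinity>")
    case True
    then have "max 0 (1 - \<bar>real_of_int (c u) - real_of_int (c v)\<bar>) = 0"
      using assms that by (simp add: overlap_eq_0_if_ne)
    then show ?thesis by (simp add: zero_ereal_def[symmetric])
  next
    case False
    have scaled: "ereal a * x \<noteq> \<infinity>" if "0 \<le> a" "x \<noteq> \<infinity>" for a :: real and x :: ereal
      using that by (cases x) auto
    show ?thesis by (rule scaled) (simp_all add: False)
  qed
  then have "(\<Sum>u\<in>U. \<Sum>v\<in>U. ereal (max 0 (1 - \<bar>real_of_int (c u) - real_of_int (c v)\<bar>)) * i u v)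
               \<noteq> \<infinity>"
    by (simp add: sum_Pinfty)
  then show ?thesis unfolding P3_obj_def by (simp add: less_top[symmetric])
qed

theorem lemma2:
  fixes U :: "'u set" and bs :: "'u \<Rightarrow> 'b" and C :: "'b \<Rightarrow> int set"
    and ong :: "'u set" and prev :: "'u \<Rightarrow> int" and i :: "'u \<Rightarrow> 'u \<Rightarrow> ereal"
  assumes finU: "finite U"
    and finC: "\<And>b. finite (C b)"
    and load: "\<And>b. card {u \<in> U. bs u = b} \<le> card (C b)"
    and ong_sub: "ong \<subseteq> U"
    and prev_in: "\<And>u. u \<in> ong \<Longrightarrow> prev u \<in> C (bs u)"
    and prev_dist: "\<And>u v. u \<in> ong \<Longrightarrow> v \<in> ong \<Longrightarrow> u \<noteq> v \<Longrightarrow> bs u = bs v \<Longrightarrow> prev u \<noteq> prev v"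
    and i_diag: "\<And>u. u \<in> U \<Longrightarrow> i u u = 0"
    and i_conf: "\<And>u v. u \<in> U \<Longrightarrow> v \<in> U \<Longrightarrow> conflicting bs ong prev u v \<Longrightarrow> i u v = \<infinity>"
    and i_fin: "\<And>u v. u \<in> U \<Longrightarrow> v \<in> U \<Longrightarrow> u \<noteq> v \<Longrightarrow> \<not> conflicting bs ong prev u v \<Longrightarrow>
                   0 \<le> i u v \<and> i u v < \<infinity>"
  shows "\<exists>c. (\<forall>u\<in>U. c u \<in> cand_set bs C ong prev u) \<and> P3_obj U i c < \<infinity>"
proof -
  obtain c where c_in: "\<forall>u\<in>U. c u \<in> C (bs u)" and c_ong: "\<forall>u\<in>ong. c u = prev u"
    and c_inj: "\<forall>u\<in>U. \<forall>v\<in>U. u \<noteq> v \<longrightarrow> bs u = bs v \<longrightarrow> c u \<noteq> c v"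
    using exists_classwise_injective_extension[OF finU finC load ong_sub prev_in prev_dist]
    by blast
  have "\<forall>u\<in>U. c u \<in> cand_set bs C ong prev u"
    using c_in c_ong by (simp add: cand_set_def)
  moreover have "c u \<noteq> c v" if "u \<in> U" "v \<in> U" "i u v = \<infinity>" for u v
  proof -
    have "conflicting bs ong prev u v"
      using that i_diag i_fin by fastforce
    then show ?thesis
      using that c_inj c_ong ong_sub unfolding conflicting_def by auto
  qed
  ultimately show ?thesis using P3_obj_less_PInfty by blast
qed

end
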